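(* (i) $\overline{\mathcal{M}\setminus\mathbb{R}}\cap\mathbb{R}\subset\mathcal{O}$; (ii) $\overline{\mathcal{N}\setminus\mathrm{Diag}(\mathbb{R})}\cap\mathrm{Diag}(\mathbb{R})\subset\mathrm{Diag}(\mathcal{O})$.
   Context: Let $\mathcal{B}=\{1+\sum_{n=1}^\infty a_n x^n : a_n\in\{-1,0,1\}\}$ (power series converging on the open unit disk $\mathbb{D}\subset\mathbb{C}$). Define $\mathcal{M}=\{z\in\mathbb{D}: \exists f\in\mathcal{B},\ f(z)=0\}$, $\mathcal{N}=\{(\gamma,\lambda)\in(-1,1)^2: \exists f\in\mathcal{B},\ f(\gamma)=f(\lambda)=0\}$, $\mathcal{O}=\{\lambda\in(-1,1): \exists f\in\mathcal{B},\ f(\lambda)=f'(\lambda)=0\}$. For $F\subset\mathbb{R}$, $\mathrm{Diag}(F)=\{(\lambda,\lambda):\lambda\in F\}$. Overlines denote closures (relative to $\mathbb{D}$, resp. $(-1,1)^2$). *)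

theory Defs
  imports "HOL-Analysis.Analysis"
begin

definition coeffsB :: "(nat \<Rightarrow> int) set" where
  "coeffsB = {a. a 0 = 1 \<and> (\<forall>n\<ge>1. a n \<in> {-1, 0, 1})}"

definition pser :: "(nat \<Rightarrow> int) \<Rightarrow> 'a::{real_normed_field,banach} \<Rightarrow> 'a" where
  "pser a x = (\<Sum>n. of_int (a n) * x ^ n)"

definition setM :: "complex set" where
  "setM = {z. norm z < 1 \<and> (\<exists>a\<in>coeffsB. pser a z = 0)}"

definition setN :: "(real \<times> real) set" where
  "setN = {(g, l). g \<in> {-1<..<1} \<and> l \<in> {-1<..<1} \<and>
                   (\<exists>a\<in>coeffsB. pser a g = 0 \<and> pser a l = 0)}"

definition setO :: "real set" where
  "setO = {l. l \<in> {-1<..<1} \<and>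
              (\<exists>a\<in>coeffsB. pser a l = 0 \<and> deriv (pser a) l = 0)}"

definition Diag :: "real set \<Rightarrow> (real \<times> real) set" where
  "Diag F = {(l, l) | l. l \<in> F}"

end

theory Submission
  imports Defs
begin

text \<open>
  Suppose the series \<open>f\<^sub>k\<close> in B vanish at two distinct points \<open>z\<^sub>k\<close> and \<open>w\<^sub>k\<close>
  which both tend to \<open>x\<close> in the unit disk. The coefficient space of B is compact for
  coefficientwise convergence, so along a subsequence the coefficients of \<open>f\<^sub>k\<close>
  converge to those of some \<open>f\<close> in B. By Tannery's theorem \<open>f\<^sub>k(z\<^sub>k) \<rightarrow> f(x)\<close>, and
  the divided differences \<open>(f\<^sub>k(z\<^sub>k) - f\<^sub>k(w\<^sub>k)) / (z\<^sub>k - w\<^sub>k) = 0\<close>, written as series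
  in the divided differences of the powers, tend to \<open>f'(x)\<close>. So \<open>x\<close> is a double zero
  of \<open>f\<close>. For (i) take \<open>w\<^sub>k = cnj z\<^sub>k\<close>, a zero as well because the coefficients are
  real; for (ii) take the two coordinates of the approximating points of N.
\<close>

lemma norm_coeffsB_le_1:
  assumes "a \<in> coeffsB"
  shows "norm (of_int (a n) :: 'a::real_normed_algebra_1) \<le> 1"
proof -
  have "a n \<in> {-1, 0, 1}"
    using assms unfolding coeffsB_def by (cases "n = 0") auto
  then show ?thesis by auto
qed

lemma coeffsB_eq_PiE: "coeffsB = PiE UNIV (\<lambda>n. if n = 0 then {1} else {-1, 0, 1})"
proof -
  have "(a 0 = 1 \<and> (\<forall>n\<ge>1. a n \<in> {-1, 0, 1})) \<longleftrightarrow> (\<forall>n. a n \<in> (if n = 0 then {1} else {-1, 0, 1}))"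
    for a :: "nat \<Rightarrow> int"
    by (metis One_nat_def less_one not_le singletonD singletonI)
  then show ?thesis
    unfolding coeffsB_def PiE_UNIV_domain Pi_def by blast
qed

lemma coeffsB_convergent_subseq:
  fixes A :: "nat \<Rightarrow> nat \<Rightarrow> int"
  assumes A: "\<And>k. A k \<in> coeffsB"
  obtains a \<sigma> where "a \<in> coeffsB" "strict_mono \<sigma>"
    "\<And>n. (\<lambda>k. real_of_int (A (\<sigma> k) n)) \<longlonglongrightarrow> real_of_int (a n)"
proof -
  \<comment> \<open>The limit is extracted in \<open>nat \<Rightarrow> real\<close>: \<open>int\<close> has the discrete topology but no
    \<open>first_countable_topology\<close> instance, which sequential compactness needs.\<close>
  define T where "T = (\<lambda>n::nat. if n = 0 then {1} else {-1, 0, 1 :: int})"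
  have "compactin (product_topology (\<lambda>_. euclidean) UNIV) (PiE UNIV (\<lambda>n. real_of_int ` T n))"
    unfolding compactin_PiE by (auto simp: T_def intro!: finite_imp_compact)
  then have compact: "compact (PiE UNIV (\<lambda>n. real_of_int ` T n))"
    unfolding euclidean_product_topology by simp
  have A_in: "\<forall>k. (\<lambda>n. real_of_int (A k n)) \<in> PiE UNIV (\<lambda>n. real_of_int ` T n)"
    using A unfolding coeffsB_eq_PiE T_def [symmetric] by (auto simp: PiE_UNIV_domain)
  obtain b \<sigma> where b: "b \<in> PiE UNIV (\<lambda>n. real_of_int ` T n)" and \<sigma>: "strict_mono \<sigma>"
    and lim: "((\<lambda>k n. real_of_int (A k n)) \<circ> \<sigma>) \<longlonglongrightarrow> b"
    using seq_compactE [OF compact_imp_seq_compact [OF compact] A_in] .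
  have "\<forall>n. \<exists>m\<in>T n. b n = real_of_int m"
    using b by (auto simp: PiE_UNIV_domain)
  then obtain a where a: "\<And>n. a n \<in> T n" "\<And>n. b n = real_of_int (a n)"
    by metis
  have "a \<in> coeffsB"
    using a(1) unfolding coeffsB_eq_PiE T_def [symmetric] PiE_UNIV_domain by auto
  moreover have "(\<lambda>k. real_of_int (A (\<sigma> k) n)) \<longlonglongrightarrow> real_of_int (a n)" for n
  proof -
    have "isCont (\<lambda>f. f n) b"
      by (metis UNIV_I continuous_on_eq_continuous_at continuous_on_product_coordinates open_UNIV)
    from isCont_tendsto_compose [OF this lim] show ?thesis
      unfolding a(2) [symmetric] by (simp add: o_def)
  qed
  ultimately show ?thesis
    using \<sigma> that by blast
qed

definition power_divdiff :: "nat \<Rightarrow> 'a::comm_ring_1 \<Rightarrow> 'a \<Rightarrow> 'a" where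
  "power_divdiff n u v = (\<Sum>i<n. v ^ (n - Suc i) * u ^ i)"

lemma power_divdiff_eq: "(u - v) * power_divdiff n u v = u ^ n - v ^ n"
  unfolding power_divdiff_def by (simp add: power_diff_sumr2)

lemma power_divdiff_same: "power_divdiff n x x = of_nat n * x ^ (n - 1)"
proof -
  have "power_divdiff n x x = (\<Sum>i<n. x ^ (n - 1))"
    unfolding power_divdiff_def by (intro sum.cong refl) (simp add: power_add [symmetric])
  then show ?thesis by simp
qed

lemma norm_power_divdiff_le:
  fixes u v :: "'a::real_normed_field"
  assumes "norm u \<le> r" "norm v \<le> r"
  shows "norm (power_divdiff n u v) \<le> real n * r ^ (n - 1)"
proof -
  have r: "0 \<le> r" using assms(1) norm_ge_zero order_trans by blast
  have "norm (power_divdiff n u v) \<le> (\<Sum>i<n. norm (v ^ (n - Suc i) * u ^ i))"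
    unfolding power_divdiff_def by (rule norm_sum)
  also have "\<dots> \<le> (\<Sum>i<n. r ^ (n - Suc i) * r ^ i)"
    unfolding norm_mult norm_power using assms r by (intro sum_mono mult_mono power_mono) auto
  also have "\<dots> = (\<Sum>i<n. r ^ (n - 1))"
    by (intro sum.cong refl) (simp add: power_add [symmetric])
  finally show ?thesis by simp
qed

lemma summable_of_nat_mult_power_pred:
  fixes r :: real
  assumes "0 \<le> r" "r < 1"
  shows "summable (\<lambda>n. real n * r ^ (n - 1))"
proof -
  have "summable (\<lambda>n. diffs (\<lambda>_. 1) n * r ^ n)"
    by (rule termdiff_converges [of r 1]) (use assms in auto)
  then have "summable (\<lambda>n. real (Suc n) * r ^ (Suc n - 1))"
    by (simp add: diffs_def)
  then show ?thesis by (subst summable_Suc_iff [symmetric])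
qed

lemma summable_pser:
  fixes z :: "'a::{real_normed_field,banach}"
  assumes "a \<in> coeffsB" "norm z < 1"
  shows "summable (\<lambda>n. of_int (a n) * z ^ n)"
proof (rule summable_comparison_test)
  show "\<exists>N. \<forall>n\<ge>N. norm (of_int (a n) * z ^ n) \<le> norm z ^ n"
    using norm_coeffsB_le_1 [OF assms(1)]
    by (auto simp: norm_mult norm_power intro!: mult_left_le_one_le)
qed (use assms in simp)

lemma pser_of_real:
  assumes "a \<in> coeffsB" "\<bar>x\<bar> < 1"
  shows "pser a (of_real x :: 'a::{real_normed_field,banach}) = of_real (pser a x)"
  unfolding pser_def using assms by (subst suminf_of_real [OF summable_pser]) auto

lemma pser_cnj:
  assumes "a \<in> coeffsB" "norm z < 1"
  shows "pser a (cnj z) = cnj (pser a z)"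
proof -
  have "(\<lambda>n. cnj (of_int (a n) * z ^ n)) sums cnj (pser a z)"
    unfolding pser_def using summable_pser [OF assms] by (intro sums_cnj [THEN iffD2] summable_sums)
  then show ?thesis
    unfolding pser_def by (simp add: sums_iff)
qed

definition pser_divdiff :: "(nat \<Rightarrow> int) \<Rightarrow> 'a::{real_normed_field,banach} \<Rightarrow> 'a \<Rightarrow> 'a" where
  "pser_divdiff a u v = (\<Sum>n. of_int (a n) * power_divdiff n u v)"

lemma summable_pser_divdiff:
  fixes u v :: "'a::{real_normed_field,banach}"
  assumes "a \<in> coeffsB" "norm u \<le> r" "norm v \<le> r" "r < 1"
  shows "summable (\<lambda>n. of_int (a n) * power_divdiff n u v)"
proof (rule summable_comparison_test)
  have "0 \<le> r" using assms(2) norm_ge_zero order_trans by blast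
  then show "summable (\<lambda>n. real n * r ^ (n - 1))"
    using assms(4) by (rule summable_of_nat_mult_power_pred)
  have "norm (of_int (a n) * power_divdiff n u v) \<le> 1 * (real n * r ^ (n - 1))" for n
    unfolding norm_mult using \<open>0 \<le> r\<close>
    by (intro mult_mono norm_coeffsB_le_1 [OF assms(1)] norm_power_divdiff_le [OF assms(2,3)]) auto
  then show "\<exists>N. \<forall>n\<ge>N. norm (of_int (a n) * power_divdiff n u v) \<le> real n * r ^ (n - 1)"
    by auto
qed

lemma pser_divdiff_eq:
  fixes u v :: "'a::{real_normed_field,banach}"
  assumes "a \<in> coeffsB" "norm u < 1" "norm v < 1"
  shows "(u - v) * pser_divdiff a u v = pser a u - pser a v"
proof -
  have "summable (\<lambda>n. of_int (a n) * power_divdiff n u v)"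
    using assms by (intro summable_pser_divdiff [of a u "max (norm u) (norm v)"]) auto
  then have "(u - v) * pser_divdiff a u v = (\<Sum>n. of_int (a n) * ((u - v) * power_divdiff n u v))"
    unfolding pser_divdiff_def by (subst suminf_mult [symmetric]) (auto simp: ac_simps)
  also have "\<dots> = (\<Sum>n. of_int (a n) * u ^ n - of_int (a n) * v ^ n)"
    by (simp only: power_divdiff_eq right_diff_distrib)
  also have "\<dots> = pser a u - pser a v"
    unfolding pser_def using assms by (intro suminf_diff [symmetric] summable_pser)
  finally show ?thesis .
qed

lemma has_field_derivative_pser:
  fixes x :: "'a::{real_normed_field,banach}"
  assumes a: "a \<in> coeffsB" and x: "norm x < 1"
  shows "(pser a has_field_derivative pser_divdiff a x x) (at x)"
proof -
  define c where "c n = (of_int (a n) :: 'a)" for n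
  obtain r where r: "norm x < r" "r < 1" "0 < r"
    using x dense norm_ge_zero by (meson le_less_trans)
  have "pser a = (\<lambda>x. \<Sum>n. c n * x ^ n)"
    unfolding pser_def c_def ..
  moreover have "((\<lambda>x. \<Sum>n. c n * x ^ n) has_field_derivative (\<Sum>n. diffs c n * x ^ n)) (at x)"
    using r unfolding c_def by (intro termdiffs_strong [of _ "of_real r"] summable_pser [OF a]) auto
  moreover have "(\<Sum>n. diffs c n * x ^ n) = pser_divdiff a x x"
  proof -
    have "summable (\<lambda>n. diffs c n * x ^ n)"
      by (rule termdiff_converges [of x 1]) (use x in \<open>auto simp: c_def intro!: summable_pser [OF a]\<close>)
    then have "(\<lambda>n. of_nat n * c n * x ^ (n - Suc 0)) sums (\<Sum>n. diffs c n * x ^ n)"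
      by (rule diffs_equiv)
    then show ?thesis
      unfolding pser_divdiff_def c_def power_divdiff_same by (simp add: sums_iff ac_simps)
  qed
  ultimately show ?thesis by simp
qed

lemma deriv_pser_of_real:
  assumes a: "a \<in> coeffsB" and x: "\<bar>x\<bar> < 1"
  shows "deriv (pser a) (of_real x :: 'a::{real_normed_field,banach}) = of_real (deriv (pser a) x)"
proof -
  have "pser_divdiff a (of_real x) (of_real x :: 'a) = of_real (pser_divdiff a x x)"
    unfolding pser_divdiff_def using x
    by (subst suminf_of_real [OF summable_pser_divdiff [OF a, of x "\<bar>x\<bar>" x]]) (auto simp: power_divdiff_same)
  then show ?thesis
    using x by (simp add: DERIV_imp_deriv [OF has_field_derivative_pser [OF a]])
qed

lemma tendsto_coeffsB_series:
  fixes u :: "nat \<Rightarrow> nat \<Rightarrow> 'a::{real_normed_field,banach}"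
  assumes A: "\<And>k. A k \<in> coeffsB"
    and coeff_lim: "\<And>n. (\<lambda>k. of_int (A k n) :: 'a) \<longlonglongrightarrow> of_int (a n)"
    and term_lim: "\<And>n. (\<lambda>k. u k n) \<longlonglongrightarrow> v n"
    and bound: "eventually (\<lambda>k. \<forall>n. norm (u k n) \<le> M n) sequentially"
    and "summable M"
  shows "(\<lambda>k. \<Sum>n. of_int (A k n) * u k n) \<longlonglongrightarrow> (\<Sum>n. of_int (a n) * v n)"
proof -
  have "norm (of_int (A k n) * u k n) \<le> M n" if "norm (u k n) \<le> M n" for k n
    using that norm_coeffsB_le_1 [OF A, of k n]
    by (auto simp: norm_mult intro: order_trans [OF mult_left_le_one_le])
  then have "eventually (\<lambda>(n, k). norm (of_int (A k n) * u k n) \<le> M n) (at_top \<times>\<^sub>F sequentially)"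
    using bound unfolding eventually_prod_filter
    by (intro exI [of _ "\<lambda>_. True"] exI [of _ "\<lambda>k. \<forall>n. norm (u k n) \<le> M n"]) auto
  with coeff_lim term_lim \<open>summable M\<close> show ?thesis
    by (intro tannerys_theorem [THEN conjunct2, THEN conjunct2] tendsto_mult) auto
qed

lemma tendsto_pser:
  fixes z :: "nat \<Rightarrow> 'a::{real_normed_field,banach}"
  assumes A: "\<And>k. A k \<in> coeffsB"
    and coeff_lim: "\<And>n. (\<lambda>k. of_int (A k n) :: 'a) \<longlonglongrightarrow> of_int (a n)"
    and z: "z \<longlonglongrightarrow> x" and x: "norm x < 1"
  shows "(\<lambda>k. pser (A k) (z k)) \<longlonglongrightarrow> pser a x"
proof -
  obtain r where r: "norm x < r" "r < 1" "0 < r"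
    using x dense norm_ge_zero by (meson le_less_trans)
  have "eventually (\<lambda>k. norm (z k) < r) sequentially"
    using order_tendstoD(2) [OF tendsto_norm [OF z] r(1)] .
  then have "eventually (\<lambda>k. \<forall>n. norm (z k ^ n) \<le> r ^ n) sequentially"
    by eventually_elim (auto simp: norm_power intro: power_mono)
  moreover have "summable (\<lambda>n. r ^ n)"
    using r by simp
  ultimately show ?thesis
    unfolding pser_def using A coeff_lim z by (intro tendsto_coeffsB_series tendsto_power) auto
qed

lemma tendsto_pser_divdiff:
  fixes z w :: "nat \<Rightarrow> 'a::{real_normed_field,banach}"
  assumes A: "\<And>k. A k \<in> coeffsB"
    and coeff_lim: "\<And>n. (\<lambda>k. of_int (A k n) :: 'a) \<longlonglongrightarrow> of_int (a n)"
    and z: "z \<longlonglongrightarrow> x" and w: "w \<longlonglongrightarrow> x" and x: "norm x < 1"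
  shows "(\<lambda>k. pser_divdiff (A k) (z k) (w k)) \<longlonglongrightarrow> pser_divdiff a x x"
proof -
  obtain r where r: "norm x < r" "r < 1" "0 < r"
    using x dense norm_ge_zero by (meson le_less_trans)
  have "eventually (\<lambda>k. norm (z k) < r) sequentially" "eventually (\<lambda>k. norm (w k) < r) sequentially"
    using order_tendstoD(2) [OF tendsto_norm [OF z] r(1)] order_tendstoD(2) [OF tendsto_norm [OF w] r(1)] .
  then have "eventually (\<lambda>k. \<forall>n. norm (power_divdiff n (z k) (w k)) \<le> real n * r ^ (n - 1)) sequentially"
    by eventually_elim (intro allI norm_power_divdiff_le less_imp_le)
  moreover have "summable (\<lambda>n. real n * r ^ (n - 1))"
    using r by (intro summable_of_nat_mult_power_pred) auto
  moreover have "(\<lambda>k. power_divdiff n (z k) (w k)) \<longlonglongrightarrow> power_divdiff n x x" for n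
    unfolding power_divdiff_def by (intro tendsto_intros z w)
  ultimately show ?thesis
    unfolding pser_divdiff_def using A coeff_lim by (intro tendsto_coeffsB_series) auto
qed

lemma double_zero_at_limit_of_zero_pairs:
  fixes z w :: "nat \<Rightarrow> 'a::{real_normed_field,banach}" and A :: "nat \<Rightarrow> nat \<Rightarrow> int"
  assumes A: "\<And>k. A k \<in> coeffsB"
    and zeros: "\<And>k. pser (A k) (z k) = 0" "\<And>k. pser (A k) (w k) = 0"
    and distinct: "\<And>k. z k \<noteq> w k"
    and disk: "\<And>k. norm (z k) < 1" "\<And>k. norm (w k) < 1"
    and z: "z \<longlonglongrightarrow> x" and w: "w \<longlonglongrightarrow> x" and x: "norm x < 1"
  shows "\<exists>a\<in>coeffsB. pser a x = 0 \<and> deriv (pser a) x = 0"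
proof -
  obtain a \<sigma> where a: "a \<in> coeffsB" and \<sigma>: "strict_mono \<sigma>"
    and lim: "\<And>n. (\<lambda>k. real_of_int (A (\<sigma> k) n)) \<longlonglongrightarrow> real_of_int (a n)"
    using coeffsB_convergent_subseq [where A = A, OF A] by blast
  have coeff_lim: "(\<lambda>k. of_int (A (\<sigma> k) n) :: 'a) \<longlonglongrightarrow> of_int (a n)" for n
    using tendsto_of_real [OF lim [of n], where 'a = 'a] by simp
  have z\<sigma>: "(\<lambda>k. z (\<sigma> k)) \<longlonglongrightarrow> x" and w\<sigma>: "(\<lambda>k. w (\<sigma> k)) \<longlonglongrightarrow> x"
    using LIMSEQ_subseq_LIMSEQ [OF z \<sigma>] LIMSEQ_subseq_LIMSEQ [OF w \<sigma>] by (simp_all add: o_def)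
  have "(\<lambda>k. pser (A (\<sigma> k)) (z (\<sigma> k))) \<longlonglongrightarrow> pser a x"
    by (intro tendsto_pser [where A = "\<lambda>k. A (\<sigma> k)"] A coeff_lim z\<sigma> x)
  then have "pser a x = 0"
    unfolding zeros(1) LIMSEQ_const_iff ..
  have "pser_divdiff (A k) (z k) (w k) = 0" for k
    using pser_divdiff_eq [OF A [of k] disk(1) [of k] disk(2) [of k]] zeros distinct by simp
  moreover have "(\<lambda>k. pser_divdiff (A (\<sigma> k)) (z (\<sigma> k)) (w (\<sigma> k))) \<longlonglongrightarrow> pser_divdiff a x x"
    by (intro tendsto_pser_divdiff [where A = "\<lambda>k. A (\<sigma> k)"] A coeff_lim z\<sigma> w\<sigma> x)
  ultimately have "pser_divdiff a x x = 0"
    by (simp add: LIMSEQ_const_iff)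
  then have "deriv (pser a) x = 0"
    using DERIV_imp_deriv [OF has_field_derivative_pser [OF a x]] by simp
  with a \<open>pser a x = 0\<close> show ?thesis by blast
qed

lemma closure_setM_nonreal_inter_Reals_subset:
  "closure (setM - \<real>) \<inter> ball 0 1 \<inter> \<real> \<subseteq> complex_of_real ` setO"
proof
  fix x assume x: "x \<in> closure (setM - \<real>) \<inter> ball 0 1 \<inter> \<real>"
  then obtain l where xl: "x = complex_of_real l" and l: "\<bar>l\<bar> < 1"
    by (auto elim: Reals_cases)
  have "x \<in> closure (setM - \<real>)"
    using x by blast
  then obtain z where zM: "\<And>k. z k \<in> setM - \<real>" and z: "z \<longlonglongrightarrow> x"
    unfolding closure_sequential by blast
  have "\<exists>A\<in>coeffsB. pser A (z k) = 0" for k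
    using zM [of k] unfolding setM_def by blast
  then obtain A where A: "\<And>k. A k \<in> coeffsB" and zeros: "\<And>k. pser (A k) (z k) = 0"
    by metis
  have disk: "norm (z k) < 1" for k
    using zM [of k] unfolding setM_def by blast
  have distinct: "z k \<noteq> cnj (z k)" for k
    using zM [of k] Reals_cnj_iff by force
  have cnj_zeros: "pser (A k) (cnj (z k)) = 0" for k
    using pser_cnj [OF A disk] zeros by simp
  have cnj_disk: "norm (cnj (z k)) < 1" for k
    using disk by simp
  have cnj_lim: "(\<lambda>k. cnj (z k)) \<longlonglongrightarrow> x"
    using tendsto_cnj [OF z] xl by simp
  obtain a where a: "a \<in> coeffsB" "pser a x = 0" "deriv (pser a) x = 0"
    using double_zero_at_limit_of_zero_pairs [OF A zeros cnj_zeros distinct disk cnj_disk z cnj_lim] l xl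
    by auto
  then have "l \<in> setO"
    unfolding setO_def xl
    using l pser_of_real [OF a(1) l, where 'a = complex] deriv_pser_of_real [OF a(1) l, where 'a = complex]
    by auto
  then show "x \<in> complex_of_real ` setO"
    using xl by blast
qed

lemma closure_setN_offdiag_inter_Diag_subset:
  "closure (setN - Diag UNIV) \<inter> ({-1<..<1} \<times> {-1<..<1}) \<inter> Diag UNIV \<subseteq> Diag setO"
proof
  fix p assume p: "p \<in> closure (setN - Diag UNIV) \<inter> ({-1<..<1} \<times> {-1<..<1}) \<inter> Diag UNIV"
  then obtain l where pl: "p = (l, l)" and l: "\<bar>l\<bar> < 1"
    unfolding Diag_def by auto
  have "p \<in> closure (setN - Diag UNIV)"
    using p by blast
  then obtain s where sN: "\<And>k. s k \<in> setN - Diag UNIV" and s: "s \<longlonglongrightarrow> p"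
    unfolding closure_sequential by blast
  have "\<exists>A\<in>coeffsB. pser A (fst (s k)) = 0 \<and> pser A (snd (s k)) = (0::real)" for k
    using sN [of k] unfolding setN_def by (cases "s k") auto
  then obtain A where A: "\<And>k. A k \<in> coeffsB"
    and zeros: "\<And>k. pser (A k) (fst (s k)) = (0::real)" "\<And>k. pser (A k) (snd (s k)) = (0::real)"
    by metis
  have distinct: "fst (s k) \<noteq> snd (s k)" and disk: "\<bar>fst (s k)\<bar> < 1" "\<bar>snd (s k)\<bar> < 1" for k
    using sN [of k] unfolding setN_def Diag_def by (cases "s k"; auto)+
  have "(\<lambda>k. fst (s k)) \<longlonglongrightarrow> l" "(\<lambda>k. snd (s k)) \<longlonglongrightarrow> l"
    using tendsto_fst [OF s] tendsto_snd [OF s] pl by simp_all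
  then have "\<exists>a\<in>coeffsB. pser a l = 0 \<and> deriv (pser a) l = 0"
    using double_zero_at_limit_of_zero_pairs [OF A zeros distinct] disk l by simp
  then show "p \<in> Diag setO"
    unfolding pl Diag_def setO_def using l by auto
qed

theorem lemma2p8:
  shows "(closure (setM - \<real>) \<inter> ball 0 1 \<inter> \<real> \<subseteq> complex_of_real ` setO)
         \<and> (closure (setN - Diag UNIV) \<inter> ({-1<..<1} \<times> {-1<..<1}) \<inter> Diag UNIV \<subseteq> Diag setO)"
  using closure_setM_nonreal_inter_Reals_subset closure_setN_offdiag_inter_Diag_subset ..

end
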